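(* Let $\mathcal Y=\{1,\dots,n\}$, $c\in(0,1)$ constant, and let $\mathcal H$ and $\mathcal R$ be closed under scaling. Let $\ell$ be a multi-class surrogate loss that is realizable $\mathcal H$-consistent with respect to $\ell_{0-1}$ (for $\mathcal H$ closed under scaling), and let $\Phi$ be non-increasing with $\Phi(t)\ge1_{t\le0}$ for all $t$ and $\lim_{t\to+\infty}\Phi(t)=0$. Let $\hat h$ be a minimizer of $\mathcal E_\ell$ over $\mathcal H$ and $\hat r$ a minimizer of $\mathcal E_{\ell_{\Phi,\hat h}}$ over $\mathcal R$. Then for any $(\mathcal H,\mathcal R)$-realizable distribution, $\mathcal E_{\mathsf L_{\rm abs}}(\hat h,\hat r)=0$.
   Context: $\mathsf h(x)=\arg\max_y h(x,y)$ with fixed tie-breaking; $\ell_{0-1}(h,x,y)=1_{\mathsf h(x)\ne y}$; $\mathsf L_{\rm abs}(h,r,x,y)=1_{\mathsf h(x)\ne y}1_{r(x)>0}+c\,1_{r(x)\le0}$; $\ell_{\Phi,h}(r,x,y)=1_{\mathsf h(x)\ne y}\Phi(-r(x))+c\,\Phi(r(x))$. $\mathcal E$ denotes expected loss and $\mathcal E^*$ its infimum over the relevant set. Closed under scaling: $g\in\mathcal G\Rightarrow\nu g\in\mathcal G$ for all $\nu\in\mathbb R$. A distribution is $(\mathcal H,\mathcal R)$-realizable if some $h^*\in\mathcal H,r^*\in\mathcal R$ have $\mathcal E_{\mathsf L_{\rm abs}}(h^*,r^* )=0$. $\ell$ is realizable $\mathcal H$-consistent w.r.t. $\ell_{0-1}$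 if for every distribution with $\mathcal E^*_{\ell_{0-1}}(\mathcal H)=0$ and every sequence $h_k\in\mathcal H$, $\lim_k\mathcal E_\ell(h_k)=\mathcal E^*_\ell(\mathcal H)$ implies $\lim_k\mathcal E_{\ell_{0-1}}(h_k)=0$. *)

theory Defs
  imports "HOL-Probability.Probability"
begin

text \<open>Labels are natural numbers; the label set is {1..n}. A scoring function
  h :: 'x => nat => real induces the prediction argmax_y h x y over {1..n},
  ties broken towards the smallest label.\<close>

definition pred :: "nat \<Rightarrow> ('x \<Rightarrow> nat \<Rightarrow> real) \<Rightarrow> 'x \<Rightarrow> nat" where
  "pred n h x = (LEAST y. y \<in> {1..n} \<and> (\<forall>y'\<in>{1..n}. h x y' \<le> h x y))"

definition zero_one_loss :: "nat \<Rightarrow> ('x \<Rightarrow> nat \<Rightarrow> real) \<Rightarrow> 'x \<Rightarrow> nat \<Rightarrow> ennreal" where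
  "zero_one_loss n h x y = (if pred n h x \<noteq> y then 1 else 0)"

definition abs_loss :: "nat \<Rightarrow> real \<Rightarrow> ('x \<Rightarrow> nat \<Rightarrow> real) \<Rightarrow> ('x \<Rightarrow> real) \<Rightarrow> 'x \<Rightarrow> nat \<Rightarrow> ennreal" where
  "abs_loss n c h r x y =
     ennreal ((if pred n h x \<noteq> y then 1 else 0) * (if r x > 0 then 1 else 0)
              + c * (if r x \<le> 0 then 1 else 0))"

definition phi_loss :: "nat \<Rightarrow> real \<Rightarrow> (real \<Rightarrow> real) \<Rightarrow> ('x \<Rightarrow> nat \<Rightarrow> real) \<Rightarrow> ('x \<Rightarrow> real) \<Rightarrow> 'x \<Rightarrow> nat \<Rightarrow> ennreal" where
  "phi_loss n c \<Phi> h r x y =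
     ennreal ((if pred n h x \<noteq> y then 1 else 0) * \<Phi> (- r x) + c * \<Phi> (r x))"

definition expected_loss :: "('x \<times> nat) measure \<Rightarrow> ('x \<Rightarrow> nat \<Rightarrow> ennreal) \<Rightarrow> ennreal" where
  "expected_loss D f = (\<integral>\<^sup>+ p. f (fst p) (snd p) \<partial>D)"

definition is_distribution :: "'x measure \<Rightarrow> nat \<Rightarrow> ('x \<times> nat) measure \<Rightarrow> bool" where
  "is_distribution MX n D \<longleftrightarrow> prob_space D \<and> sets D = sets (MX \<Otimes>\<^sub>M count_space UNIV)
     \<and> (AE p in D. snd p \<in> {1..n})"

definition realizable_consistent ::
  "'x measure \<Rightarrow> nat \<Rightarrow> ('x \<Rightarrow> nat \<Rightarrow> real) set \<Rightarrow> (('x \<Rightarrow> nat \<Rightarrow> real) \<Rightarrow> 'x \<Rightarrow> nat \<Rightarrow> ennreal) \<Rightarrow> bool" where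
  "realizable_consistent MX n H L \<longleftrightarrow>
     (\<forall>D. is_distribution MX n D \<longrightarrow>
        (INF h\<in>H. expected_loss D (zero_one_loss n h)) = 0 \<longrightarrow>
        (\<forall>hs. (\<forall>k. hs k \<in> H) \<longrightarrow>
           (\<lambda>k. expected_loss D (L (hs k))) \<longlonglongrightarrow> (INF h\<in>H. expected_loss D (L h)) \<longrightarrow>
           (\<lambda>k. expected_loss D (zero_one_loss n (hs k))) \<longlonglongrightarrow> 0))"

definition realizable ::
  "'x measure \<Rightarrow> nat \<Rightarrow> real \<Rightarrow> ('x \<Rightarrow> nat \<Rightarrow> real) set \<Rightarrow> ('x \<Rightarrow> real) set \<Rightarrow> ('x \<times> nat) measure \<Rightarrow> bool" where
  "realizable MX n c H R D \<longleftrightarrow> is_distribution MX n D \<and>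
     (\<exists>h\<in>H. \<exists>r\<in>R. expected_loss D (abs_loss n c h r) = 0)"

end

theory Submission
  imports Defs
begin

(* Realizability yields a pair (hs, rs) with hs almost surely correct and rs > 0 almost surely,
   so the infimum of the 0-1 risk over H is 0; realizable consistency applied to the constant
   sequence at the surrogate minimizer hh then makes hh almost surely correct as well. On that
   event the Phi-loss of hh with the rejector k rs is c Phi(k rs), whose expectation tends to 0 by
   monotone convergence. So the minimal Phi-risk is 0 and is attained at rr, which forces
   Phi(rr) = 0, hence rr > 0, almost surely: hh is correct and rr never abstains. *)

lemma measurable_pred [measurable]:
  assumes "\<And>y. (\<lambda>x. h x y) \<in> borel_measurable M"
  shows "pred n h \<in> measurable M (count_space UNIV)"
  unfolding pred_def using assms by measurable

lemma measurable_eq_snd [measurable]: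
  fixes f :: "'a \<Rightarrow> 'b::countable"
  assumes [measurable]: "f \<in> measurable M (count_space UNIV)"
  shows "Measurable.pred (M \<Otimes>\<^sub>M count_space UNIV) (\<lambda>p. f (fst p) = snd p)"
proof -
  have "Measurable.pred (M \<Otimes>\<^sub>M count_space UNIV) (\<lambda>p. (\<lambda>k p. f (fst p) = k) (snd p) p)"
    by (rule measurable_compose_countable) measurable
  then show ?thesis by simp
qed

lemma borel_measurable_antimono:
  fixes f :: "real \<Rightarrow> real"
  assumes "antimono f"
  shows "f \<in> borel_measurable borel"
proof -
  have "mono (\<lambda>t. - f t)" using assms by (auto simp: mono_def antimono_def)
  then have "(\<lambda>t. - f t) \<in> borel_measurable borel" by (rule borel_measurable_mono)
  then show ?thesis by (simp add: borel_measurable_uminus_eq)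
qed

lemma measurable_zero_one_loss:
  assumes [measurable]: "\<And>y. (\<lambda>x. h x y) \<in> borel_measurable M"
  shows "(\<lambda>p. zero_one_loss n h (fst p) (snd p)) \<in> borel_measurable (M \<Otimes>\<^sub>M count_space UNIV)"
  unfolding zero_one_loss_def by measurable

lemma measurable_abs_loss:
  assumes [measurable]: "\<And>y. (\<lambda>x. h x y) \<in> borel_measurable M" "r \<in> borel_measurable M"
  shows "(\<lambda>p. abs_loss n c h r (fst p) (snd p)) \<in> borel_measurable (M \<Otimes>\<^sub>M count_space UNIV)"
  unfolding abs_loss_def by measurable

lemma measurable_phi_loss:
  assumes [measurable]: "\<And>y. (\<lambda>x. h x y) \<in> borel_measurable M" "r \<in> borel_measurable M"
    "\<Phi> \<in> borel_measurable borel"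
  shows "(\<lambda>p. phi_loss n c \<Phi> h r (fst p) (snd p)) \<in> borel_measurable (M \<Otimes>\<^sub>M count_space UNIV)"
  unfolding phi_loss_def by measurable

lemma zero_one_loss_eq_0_iff: "zero_one_loss n h x y = 0 \<longleftrightarrow> pred n h x = y"
  by (simp add: zero_one_loss_def)

lemma abs_loss_eq_0_iff:
  assumes "0 < c"
  shows "abs_loss n c h r x y = 0 \<longleftrightarrow> pred n h x = y \<and> 0 < r x"
  using assms by (auto simp: abs_loss_def)

lemma phi_loss_eq_0_imp_pos:
  assumes "0 < c" and Phi_ge: "\<And>t. \<Phi> t \<ge> (if t \<le> 0 then 1 else 0)"
    and "phi_loss n c \<Phi> h r x y = 0"
  shows "0 < r x"
proof -
  have "0 \<le> \<Phi> t" for t using Phi_ge[of t] by (auto split: if_splits)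
  then have "c * \<Phi> (r x) \<le> 0"
    using assms(3) unfolding phi_loss_def ennreal_eq_0_iff
    by (smt (verit) mult_nonneg_nonneg)
  then have "\<Phi> (r x) \<le> 0" using \<open>0 < c\<close> by (simp add: mult_le_0_iff)
  then show ?thesis using Phi_ge[of "r x"] by (auto split: if_splits)
qed

lemma expected_loss_eq_0_iff_AE:
  assumes "sets D = sets M" "(\<lambda>p. f (fst p) (snd p)) \<in> borel_measurable M"
  shows "expected_loss D f = 0 \<longleftrightarrow> (AE p in D. f (fst p) (snd p) = 0)"
  using assms unfolding expected_loss_def
  by (simp add: nn_integral_0_iff_AE measurable_cong_sets[OF assms(1) refl])

lemma expected_zero_one_loss_eq_0_iff:
  assumes "is_distribution MX n D" "\<And>y. (\<lambda>x. h x y) \<in> borel_measurable MX"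
  shows "expected_loss D (zero_one_loss n h) = 0 \<longleftrightarrow> (AE p in D. pred n h (fst p) = snd p)"
  using assms
  by (simp add: expected_loss_eq_0_iff_AE measurable_zero_one_loss is_distribution_def
      zero_one_loss_eq_0_iff)

lemma expected_abs_loss_eq_0_iff:
  assumes "is_distribution MX n D" "0 < c"
    and "\<And>y. (\<lambda>x. h x y) \<in> borel_measurable MX" "r \<in> borel_measurable MX"
  shows "expected_loss D (abs_loss n c h r) = 0
    \<longleftrightarrow> (AE p in D. pred n h (fst p) = snd p \<and> 0 < r (fst p))"
  using assms
  by (simp add: expected_loss_eq_0_iff_AE measurable_abs_loss is_distribution_def abs_loss_eq_0_iff)

lemma nn_integral_scaled_antimono_INF_eq_0:
  fixes \<Phi> :: "real \<Rightarrow> real" and s :: "'a \<Rightarrow> real"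
  assumes "finite_measure M" and Phi_mono: "antimono \<Phi>" and Phi_lim: "(\<Phi> \<longlongrightarrow> 0) at_top"
    and [measurable]: "s \<in> borel_measurable M" and pos: "AE x in M. 0 < s x"
  shows "(INF k. \<integral>\<^sup>+x. ennreal (\<Phi> (real k * s x)) \<partial>M) = 0"
proof -
  have [measurable]: "\<Phi> \<in> borel_measurable borel"
    using Phi_mono by (rule borel_measurable_antimono)
  have "(INF k. \<integral>\<^sup>+x. ennreal (\<Phi> (real k * s x)) \<partial>M)
      = \<integral>\<^sup>+x. (INF k. ennreal (\<Phi> (real k * s x))) \<partial>M"
  proof (rule nn_integral_monotone_convergence_INF_AE'[symmetric])
    show "AE x in M. ennreal (\<Phi> (real (Suc k) * s x)) \<le> ennreal (\<Phi> (real k * s x))" for k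
      using pos by eventually_elim (auto intro!: ennreal_leI antimonoD[OF Phi_mono])
    show "(\<integral>\<^sup>+x. ennreal (\<Phi> (real 0 * s x)) \<partial>M) < \<infinity>"
      using finite_measure.emeasure_finite[OF assms(1)] by (simp add: ennreal_mult_less_top top.not_eq_extremum)
  qed measurable
  also have "\<dots> = (\<integral>\<^sup>+x. 0 \<partial>M)"
  proof (rule nn_integral_cong_AE)
    show "AE x in M. (INF k. ennreal (\<Phi> (real k * s x))) = 0"
      using pos
    proof eventually_elim
      case (elim x)
      have "filterlim (\<lambda>k. real k * s x) at_top sequentially"
        using filterlim_tendsto_pos_mult_at_top[OF tendsto_const elim filterlim_real_sequentially]
        by (simp add: mult.commute)
      then have "(\<lambda>k. ennreal (\<Phi> (real k * s x))) \<longlonglongrightarrow> ennreal 0"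
        by (intro tendsto_ennrealI filterlim_compose[OF Phi_lim])
      then have "(INF k. ennreal (\<Phi> (real k * s x))) \<le> ennreal 0"
        by (rule LIMSEQ_le_const) (auto intro: INF_lower)
      then show ?case by simp
    qed
  qed
  finally show ?thesis by simp
qed

lemma realizable_consistent_minimizer_zero_one_loss:
  assumes "realizable_consistent MX n H L" "is_distribution MX n D"
    and "(INF h\<in>H. expected_loss D (zero_one_loss n h)) = 0"
    and "h \<in> H" "expected_loss D (L h) = (INF h\<in>H. expected_loss D (L h))"
  shows "expected_loss D (zero_one_loss n h) = 0"
proof -
  have "(\<lambda>k. expected_loss D (zero_one_loss n h)) \<longlonglongrightarrow> 0"
    using assms unfolding realizable_consistent_def by auto
  then show ?thesis by (simp add: LIMSEQ_const_iff)
qed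

lemma INF_expected_phi_loss_eq_0:
  fixes \<Phi> :: "real \<Rightarrow> real"
  assumes dist: "is_distribution MX n D" and "0 \<le> c"
    and R_scale: "\<And>g \<nu>. g \<in> R \<Longrightarrow> (\<lambda>x. \<nu> * g x) \<in> R"
    and "s \<in> R" "s \<in> borel_measurable MX"
    and Phi_mono: "antimono \<Phi>" and Phi_lim: "(\<Phi> \<longlongrightarrow> 0) at_top"
    and AE: "AE p in D. pred n h (fst p) = snd p \<and> 0 < s (fst p)"
  shows "(INF r\<in>R. expected_loss D (phi_loss n c \<Phi> h r)) = 0"
proof -
  have sets_D: "sets D = sets (MX \<Otimes>\<^sub>M count_space UNIV)" and "prob_space D"
    using dist by (auto simp: is_distribution_def)
  have scaled: "expected_loss D (phi_loss n c \<Phi> h (\<lambda>x. real k * s x))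
      = (\<integral>\<^sup>+p. ennreal (c * \<Phi> (real k * s (fst p))) \<partial>D)" for k
    unfolding expected_loss_def
    by (rule nn_integral_cong_AE) (use AE in \<open>auto elim!: eventually_mono simp: phi_loss_def\<close>)
  have "(INF r\<in>R. expected_loss D (phi_loss n c \<Phi> h r))
      \<le> (INF k. \<integral>\<^sup>+p. ennreal (c * \<Phi> (real k * s (fst p))) \<partial>D)"
    by (rule INF_greatest) (metis scaled INF_lower R_scale[OF \<open>s \<in> R\<close>])
  also have "\<dots> = 0"
  proof (rule nn_integral_scaled_antimono_INF_eq_0)
    show "finite_measure D"
      using \<open>prob_space D\<close> by (simp add: prob_space_def)
    show "antimono (\<lambda>t. c * \<Phi> t)"
      using Phi_mono \<open>0 \<le> c\<close> by (auto simp: antimono_def mult_left_mono)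
    show "((\<lambda>t. c * \<Phi> t) \<longlongrightarrow> 0) at_top"
      using Phi_lim by (rule tendsto_mult_right_zero)
    show "(\<lambda>p. s (fst p)) \<in> borel_measurable D"
      unfolding measurable_cong_sets[OF sets_D refl] using \<open>s \<in> borel_measurable MX\<close> by measurable
  qed (use AE in \<open>auto elim: eventually_mono\<close>)
  finally show ?thesis by simp
qed

theorem theorem12:
  fixes MX :: "'x measure" and n :: nat and c :: real
    and H :: "('x \<Rightarrow> nat \<Rightarrow> real) set" and R :: "('x \<Rightarrow> real) set"
    and L :: "('x \<Rightarrow> nat \<Rightarrow> real) \<Rightarrow> 'x \<Rightarrow> nat \<Rightarrow> ennreal"
    and \<Phi> :: "real \<Rightarrow> real"
    and D :: "('x \<times> nat) measure"
    and hh :: "'x \<Rightarrow> nat \<Rightarrow> real" and rr :: "'x \<Rightarrow> real"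
  assumes c: "0 < c" "c < 1"
    and H_scale: "\<And>g \<nu>. g \<in> H \<Longrightarrow> (\<lambda>x y. \<nu> * g x y) \<in> H"
    and R_scale: "\<And>g \<nu>. g \<in> R \<Longrightarrow> (\<lambda>x. \<nu> * g x) \<in> R"
    and H_meas: "\<And>h y. h \<in> H \<Longrightarrow> (\<lambda>x. h x y) \<in> borel_measurable MX"
    and R_meas: "\<And>r. r \<in> R \<Longrightarrow> r \<in> borel_measurable MX"
    and cons: "realizable_consistent MX n H L"
    and Phi_mono: "antimono \<Phi>"
    and Phi_ge: "\<And>t. \<Phi> t \<ge> (if t \<le> 0 then 1 else 0)"
    and Phi_lim: "(\<Phi> \<longlongrightarrow> 0) at_top"
    and real: "realizable MX n c H R D"
    and hh: "hh \<in> H" "expected_loss D (L hh) = (INF h\<in>H. expected_loss D (L h))"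
    and rr: "rr \<in> R"
      "expected_loss D (phi_loss n c \<Phi> hh rr) = (INF r\<in>R. expected_loss D (phi_loss n c \<Phi> hh r))"
  shows "expected_loss D (abs_loss n c hh rr) = 0"
proof -
  obtain hs rs where hs: "hs \<in> H" and rs: "rs \<in> R"
    and "expected_loss D (abs_loss n c hs rs) = 0" and dist: "is_distribution MX n D"
    using real by (auto simp: realizable_def)
  then have AE_hs_rs: "AE p in D. pred n hs (fst p) = snd p \<and> 0 < rs (fst p)"
    using expected_abs_loss_eq_0_iff[OF dist c(1) H_meas[OF hs] R_meas[OF rs]] by simp
  then have "expected_loss D (zero_one_loss n hs) = 0"
    by (auto simp: expected_zero_one_loss_eq_0_iff[OF dist H_meas[OF hs]] elim: eventually_mono)
  then have "(INF h\<in>H. expected_loss D (zero_one_loss n h)) = 0"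
    using hs by (metis INF_lower le_zero_eq)
  then have "expected_loss D (zero_one_loss n hh) = 0"
    using realizable_consistent_minimizer_zero_one_loss[OF cons dist _ hh] by blast
  then have AE_hh: "AE p in D. pred n hh (fst p) = snd p"
    using expected_zero_one_loss_eq_0_iff[OF dist H_meas[OF hh(1)]] by simp
  have "(INF r\<in>R. expected_loss D (phi_loss n c \<Phi> hh r)) = 0"
    using AE_hh AE_hs_rs c(1)
    by (intro INF_expected_phi_loss_eq_0[OF dist _ R_scale rs R_meas[OF rs] Phi_mono Phi_lim])
       (auto elim: eventually_rev_mp)
  then have "AE p in D. phi_loss n c \<Phi> hh rr (fst p) (snd p) = 0"
    using rr(2) dist measurable_phi_loss[OF H_meas[OF hh(1)] R_meas[OF rr(1)]
        borel_measurable_antimono[OF Phi_mono]]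
    by (simp add: expected_loss_eq_0_iff_AE is_distribution_def)
  then have "AE p in D. 0 < rr (fst p)"
    by (auto elim: eventually_mono intro: phi_loss_eq_0_imp_pos[OF c(1) Phi_ge])
  with AE_hh show ?thesis
    using expected_abs_loss_eq_0_iff[OF dist c(1) H_meas[OF hh(1)] R_meas[OF rr(1)]]
    by (auto elim: eventually_rev_mp)
qed

end
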